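(* Let $n\geq 14$ and let $S$ be a Steiner quadruple system S$(3,4,n)$ on the point set $\mathbb{Z}_n$, and let $A,B$ be a partition of $\mathbb{Z}_n$ into subsets of sizes $3$ and $n-3$, respectively. If there exists a perpendicular array PA$_\lambda(4,n-3,n-3)$, then there exists a large set with multiplicity LS$(3,4,n;\mu)$, where $\mu=\lambda\binom{n-4}{3}\big/4$.
   Context: A Steiner system S$(t,k,n)$ is a pair $(Q,B)$ where $Q$ is an $n$-set and $B$ is a collection of $k$-subsets (blocks) of $Q$ such that every $t$-subset of $Q$ is contained in exactly one block. A large set with multiplicity $\mu$, LS$(t,k,n;\mu)$, is a family (the same system may occur more than once) of Steiner systems S$(t,k,n)$ on a common $n$-set $Q$ such that every $k$-subset of $Q$ is a block of exactly $\mu$ of the systems. A perpendicular array PA$_\lambda(k,\ell,m)$ is a $\lambda\binom{m}{k}\times \ell$ matrix with entries from an $m$-set such that each row has $\ell$ distinct entries and, in the submatrix formed by any $k$ columns, each $k$-subset of the $m$-set occurs (as the set of entries of a row) exactly $\lambda$ times. *)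

theory Defs
  imports Main
begin

definition steiner_system :: "nat \<Rightarrow> nat \<Rightarrow> 'a set \<Rightarrow> 'a set set \<Rightarrow> bool" where
  "steiner_system t k Q Bl \<longleftrightarrow>
     (\<forall>K\<in>Bl. K \<subseteq> Q \<and> card K = k) \<and>
     (\<forall>T. T \<subseteq> Q \<and> card T = t \<longrightarrow> (\<exists>!K. K \<in> Bl \<and> T \<subseteq> K))"

definition large_set :: "nat \<Rightarrow> nat \<Rightarrow> 'a set \<Rightarrow> nat \<Rightarrow> 'a set set list \<Rightarrow> bool" where
  "large_set t k Q mu Ls \<longleftrightarrow>
     (\<forall>D\<in>set Ls. steiner_system t k Q D) \<and>
     (\<forall>K. K \<subseteq> Q \<and> card K = k \<longrightarrow> length (filter (\<lambda>D. K \<in> D) Ls) = mu)"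

definition perp_array :: "nat \<Rightarrow> nat \<Rightarrow> nat \<Rightarrow> nat \<Rightarrow> nat list list \<Rightarrow> bool" where
  "perp_array lam k l m M \<longleftrightarrow>
     length M = lam * (m choose k) \<and>
     (\<forall>r\<in>set M. length r = l \<and> distinct r \<and> set r \<subseteq> {0..<m}) \<and>
     (\<forall>C K. C \<subseteq> {0..<l} \<and> card C = k \<and> K \<subseteq> {0..<m} \<and> card K = k \<longrightarrow>
        length (filter (\<lambda>r. (\<lambda>c. r ! c) ` C = K) M) = lam)"

end

(*
  Identify B with {0..<n - 3} and read each row of the perpendicular array as a permutation
  of B, extended by the identity on A.  These permutations map every 4-subset of B onto every
  4-subset exactly lam times; by double counting, the number of them mapping a smaller subset X
  of B onto Y is then independent of Y as long as |Y| = |X|.  Applying them to S gives Steiner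
  systems, and the number c(K) of those containing a 4-set K depends only on K \<inter> A.  Each
  system has exactly one block through a triple T, so the c(insert x T) for x outside T sum to
  the number lam * C(n - 3, 4) of systems; induction on |A - K| turns these equations into
  (n - 3) * c(K) = lam * C(n - 3, 4), i.e. c(K) = lam * C(n - 4, 3) / 4.
*)
theory Submission
  imports Defs
begin

lemma sum_length_filter_eq_sum_list_card:
  assumes "finite I"
  shows "(\<Sum>a\<in>I. length (filter (P a) xs)) = (\<Sum>x\<leftarrow>xs. card {a\<in>I. P a x})"
proof (induction xs)
  case Nil
  then show ?case by simp
next
  case (Cons x xs)
  have "(\<Sum>a\<in>I. length (filter (P a) (x # xs))) =
        (\<Sum>a\<in>I. of_bool (P a x)) + (\<Sum>a\<in>I. length (filter (P a) xs))"
    unfolding sum.distrib[symmetric] by (intro sum.cong) auto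
  also have "(\<Sum>a\<in>I. of_bool (P a x)) = card {a\<in>I. P a x}"
    using assms by (simp add: sum.inter_filter[symmetric] Int_def)
  finally show ?case using Cons by simp
qed

lemma sum_list_of_bool_mult:
  "(\<Sum>x\<leftarrow>xs. of_bool (P x) * (c::nat)) = length (filter P xs) * c"
  by (induction xs) auto

lemma card_inj_on_fiber:
  assumes "inj_on g S"
  shows "card {D\<in>S. g D = K} = of_bool (K \<in> g ` S)"
proof (cases "K \<in> g ` S")
  case True
  then obtain D0 where "D0 \<in> S" "K = g D0" by blast
  with assms have "{D\<in>S. g D = K} = {D0}" by (auto simp: inj_on_eq_iff)
  with True show ?thesis by simp
next
  case False
  then show ?thesis by (auto simp: card_eq_0_iff)
qed

lemma length_filter_contains_avoids_remove:
  assumes "w \<in> W"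
  shows "length (filter (\<lambda>x. W - {w} \<subseteq> g x \<and> g x \<inter> V = {}) xs) =
    length (filter (\<lambda>x. W \<subseteq> g x \<and> g x \<inter> V = {}) xs) +
    length (filter (\<lambda>x. W - {w} \<subseteq> g x \<and> g x \<inter> insert w V = {}) xs)"
  using assms by (induction xs) auto

locale homogeneous_perm_list =
  fixes U :: "'a set" and fs :: "('a \<Rightarrow> 'a) list" and k lam :: nat
  assumes finite_U: "finite U"
    and bij_betw_fs: "f \<in> set fs \<Longrightarrow> bij_betw f U U"
    and homogeneous: "X \<subseteq> U \<Longrightarrow> Y \<subseteq> U \<Longrightarrow> card X = k \<Longrightarrow> card Y = k \<Longrightarrow>
       length (filter (\<lambda>f. f ` X = Y) fs) = lam"
begin

lemma card_image_fs: "f \<in> set fs \<Longrightarrow> X \<subseteq> U \<Longrightarrow> card (f ` X) = card X"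
  using bij_betw_fs by (metis bij_betw_def card_image inj_on_subset)

lemma image_fs_subset: "f \<in> set fs \<Longrightarrow> X \<subseteq> U \<Longrightarrow> f ` X \<subseteq> U"
  using bij_betw_fs by (auto simp: bij_betw_def)

text \<open>Double counting the pairs \<open>(X', f)\<close> with \<open>X \<subseteq> X'\<close> and \<open>f ` X' = Z\<close>:
  since \<open>f\<close> is a bijection, such an \<open>X'\<close> exists (and is unique) iff \<open>f ` X \<subseteq> Z\<close>.\<close>
lemma length_filter_image_subset_k_set:
  assumes X: "X \<subseteq> U" and Z: "Z \<subseteq> U" "card Z = k"
  shows "length (filter (\<lambda>f. f ` X \<subseteq> Z) fs) = card {X'. X' \<subseteq> U \<and> X \<subseteq> X' \<and> card X' = k} * lam"
proof -
  define I where "I = {X'. X' \<subseteq> U \<and> X \<subseteq> X' \<and> card X' = k}"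
  have "finite I"
    unfolding I_def using finite_U by (auto intro: finite_subset[of _ "Pow U"])
  have fiber: "card {X'\<in>I. f ` X' = Z} = of_bool (f ` X \<subseteq> Z)" if f: "f \<in> set fs" for f
  proof -
    have bij: "bij_betw f U U" using bij_betw_fs f .
    have "inj_on ((`) f) I"
      using bij unfolding I_def bij_betw_def by (auto intro: inj_on_subset[OF inj_on_image_Pow])
    moreover have "Z \<in> (`) f ` I \<longleftrightarrow> f ` X \<subseteq> Z"
    proof
      assume "Z \<in> (`) f ` I"
      then show "f ` X \<subseteq> Z" unfolding I_def by auto
    next
      assume fXZ: "f ` X \<subseteq> Z"
      define X' where "X' = inv_into U f ` Z"
      have "f ` X' = Z" "X' \<subseteq> U"
        using Z bij unfolding X'_def bij_betw_def
        by (auto simp: image_inv_into_cancel intro!: inv_into_into)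
      moreover have "X \<subseteq> X'"
        using X fXZ bij unfolding X'_def bij_betw_def by (metis image_mono inv_into_image_cancel)
      moreover have "card X' = k"
        using Z bij \<open>X' \<subseteq> U\<close> \<open>f ` X' = Z\<close> unfolding bij_betw_def
        by (metis card_image inj_on_subset)
      ultimately show "Z \<in> (`) f ` I" unfolding I_def by blast
    qed
    ultimately show ?thesis by (simp add: card_inj_on_fiber)
  qed
  have "card I * lam = (\<Sum>X'\<in>I. length (filter (\<lambda>f. f ` X' = Z) fs))"
    using homogeneous Z unfolding I_def by simp
  also have "\<dots> = (\<Sum>f\<leftarrow>fs. card {X'\<in>I. f ` X' = Z})"
    by (rule sum_length_filter_eq_sum_list_card[OF \<open>finite I\<close>])
  also have "\<dots> = (\<Sum>f\<leftarrow>fs. of_bool (f ` X \<subseteq> Z) * 1)"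
    using fiber by (intro arg_cong[where f = sum_list] map_cong) auto
  finally show ?thesis unfolding I_def sum_list_of_bool_mult by simp
qed

lemma sum_length_filter_image_subset_delete:
  assumes X: "X \<subseteq> U" and Z: "Z \<subseteq> U"
  shows "(\<Sum>z\<in>Z. length (filter (\<lambda>f. f ` X \<subseteq> Z - {z}) fs)) =
    length (filter (\<lambda>f. f ` X \<subseteq> Z) fs) * (card Z - card X)"
proof -
  have "finite Z" using Z finite_U finite_subset by blast
  have "card {z\<in>Z. f ` X \<subseteq> Z - {z}} = of_bool (f ` X \<subseteq> Z) * (card Z - card X)"
    if f: "f \<in> set fs" for f
  proof (cases "f ` X \<subseteq> Z")
    case True
    then have "{z\<in>Z. f ` X \<subseteq> Z - {z}} = Z - f ` X" by auto
    with True show ?thesis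
      using card_image_fs[OF f X] \<open>finite Z\<close> by (simp add: card_Diff_subset finite_subset)
  next
    case False
    then show ?thesis by (auto simp: card_eq_0_iff)
  qed
  then have "(\<Sum>f\<leftarrow>fs. card {z\<in>Z. f ` X \<subseteq> Z - {z}}) =
      (\<Sum>f\<leftarrow>fs. of_bool (f ` X \<subseteq> Z) * (card Z - card X))"
    by (intro arg_cong[where f = sum_list] map_cong) auto
  then show ?thesis
    by (simp add: sum_length_filter_eq_sum_list_card[OF \<open>finite Z\<close>] sum_list_of_bool_mult)
qed

lemma length_filter_image_subset_indep:
  assumes X: "X \<subseteq> U" "card X \<le> k"
  shows "k \<le> s \<Longrightarrow> Z \<subseteq> U \<Longrightarrow> Z' \<subseteq> U \<Longrightarrow> card Z = s \<Longrightarrow> card Z' = s \<Longrightarrow>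
    length (filter (\<lambda>f. f ` X \<subseteq> Z) fs) = length (filter (\<lambda>f. f ` X \<subseteq> Z') fs)"
proof (induction s arbitrary: Z Z' rule: nat_induct_at_least)
  case base
  then show ?case using length_filter_image_subset_k_set X by simp
next
  case (Suc s)
  obtain z0 where z0: "z0 \<in> Z'" using Suc.prems by fastforce
  define c where "c = length (filter (\<lambda>f. f ` X \<subseteq> Z' - {z0}) fs)"
  have c: "length (filter (\<lambda>f. f ` X \<subseteq> W - {z}) fs) = c"
    if "W \<subseteq> U" "card W = Suc s" "z \<in> W" for W z
    unfolding c_def using Suc that z0 by (intro Suc.IH) auto
  have "length (filter (\<lambda>f. f ` X \<subseteq> W) fs) * (Suc s - card X) = Suc s * c"
    if "W \<subseteq> U" "card W = Suc s" for W
    using sum_length_filter_image_subset_delete[OF X(1) that(1)] c that by simp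
  moreover have "Suc s - card X > 0" using Suc X by simp
  ultimately show ?case using Suc.prems by (metis mult_right_cancel not_gr0)
qed

text \<open>Splitting by whether \<open>w \<in> f ` X\<close> moves a point from \<open>W\<close> to \<open>V\<close>; at \<open>W = {}\<close> the
  condition is \<open>f ` X \<subseteq> U - V\<close> with \<open>card (U - V) \<ge> k\<close>, handled by the previous lemma.\<close>
lemma length_filter_contains_avoids_indep:
  assumes X: "X \<subseteq> U" "card X \<le> k"
  shows "j + card V + k \<le> card U \<Longrightarrow> W \<subseteq> U \<Longrightarrow> V \<subseteq> U \<Longrightarrow> W' \<subseteq> U \<Longrightarrow> V' \<subseteq> U \<Longrightarrow>
    W \<inter> V = {} \<Longrightarrow> W' \<inter> V' = {} \<Longrightarrow> card W = j \<Longrightarrow> card W' = j \<Longrightarrow> card V' = card V \<Longrightarrow>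
    length (filter (\<lambda>f. W \<subseteq> f ` X \<and> f ` X \<inter> V = {}) fs) =
    length (filter (\<lambda>f. W' \<subseteq> f ` X \<and> f ` X \<inter> V' = {}) fs)"
proof (induction j arbitrary: W V W' V')
  case 0
  have "finite W" "finite W'" "finite V" "finite V'"
    using 0 finite_U finite_subset by blast+
  with 0 have "W = {}" "W' = {}" by auto
  have avoid: "filter (\<lambda>f. {} \<subseteq> f ` X \<and> f ` X \<inter> V = {}) fs = filter (\<lambda>f. f ` X \<subseteq> U - V) fs"
    for V
    using image_fs_subset[OF _ X(1)] by (intro filter_cong) auto
  show ?case
    unfolding \<open>W = {}\<close> \<open>W' = {}\<close> avoid
    using 0 \<open>finite V\<close> \<open>finite V'\<close> finite_U
    by (intro length_filter_image_subset_indep[OF X, of "card U - card V"])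
      (auto simp: card_Diff_subset)
next
  case (Suc j)
  have "finite W" "finite W'" using Suc finite_U finite_subset by blast+
  obtain w w' where w: "w \<in> W" and w': "w' \<in> W'" using Suc.prems by fastforce
  have IH1: "length (filter (\<lambda>f. W - {w} \<subseteq> f ` X \<and> f ` X \<inter> V = {}) fs) =
      length (filter (\<lambda>f. W' - {w'} \<subseteq> f ` X \<and> f ` X \<inter> V' = {}) fs)"
    using Suc w w' \<open>finite W\<close> \<open>finite W'\<close> by (intro Suc.IH) auto
  have "finite V" "finite V'" "w \<notin> V" "w' \<notin> V'"
    using Suc.prems w w' finite_U finite_subset by blast+
  then have IH2: "length (filter (\<lambda>f. W - {w} \<subseteq> f ` X \<and> f ` X \<inter> insert w V = {}) fs) =
      length (filter (\<lambda>f. W' - {w'} \<subseteq> f ` X \<and> f ` X \<inter> insert w' V' = {}) fs)"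
    using Suc w w' \<open>finite W\<close> \<open>finite W'\<close> by (intro Suc.IH) auto
  show ?case
    using length_filter_contains_avoids_remove[OF w, of "\<lambda>f. f ` X" V fs]
      length_filter_contains_avoids_remove[OF w', of "\<lambda>f. f ` X" V' fs] IH1 IH2
    by linarith
qed

lemma length_filter_image_eq_indep:
  assumes "X \<subseteq> U" "card X \<le> k" "card X + k \<le> card U"
    and "Y \<subseteq> U" "Y' \<subseteq> U" "card Y = card X" "card Y' = card X"
  shows "length (filter (\<lambda>f. f ` X = Y) fs) = length (filter (\<lambda>f. f ` X = Y') fs)"
proof -
  have eq: "filter (\<lambda>f. f ` X = Y) fs = filter (\<lambda>f. Y \<subseteq> f ` X \<and> f ` X \<inter> {} = {}) fs"
    if "Y \<subseteq> U" "card Y = card X" for Y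
  proof (rule filter_cong[OF refl])
    fix f assume f: "f \<in> set fs"
    have "finite (f ` X)" using assms(1) finite_U finite_subset by blast
    then show "(f ` X = Y) = (Y \<subseteq> f ` X \<and> f ` X \<inter> {} = {})"
      using card_subset_eq[of "f ` X" Y] card_image_fs[OF f assms(1)] that by auto
  qed
  show ?thesis
    unfolding eq[OF assms(4,6)] eq[OF assms(5,7)]
    by (rule length_filter_contains_avoids_indep) (use assms in auto)
qed

end

lemma steiner_system_image:
  assumes p: "bij_betw p Q Q" and S: "steiner_system t k Q S"
  shows "steiner_system t k Q ((`) p ` S)"
proof -
  define q where "q = inv_into Q p"
  have inj: "inj_on p Q" and surj: "p ` Q = Q" using p by (auto simp: bij_betw_def)
  have q: "bij_betw q Q Q" unfolding q_def using p by (rule bij_betw_inv_into)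
  have blocks: "D \<subseteq> Q" "card D = k" if "D \<in> S" for D
    using S that unfolding steiner_system_def by auto
  have cover_iff: "T \<subseteq> p ` D \<longleftrightarrow> q ` T \<subseteq> D" if "T \<subseteq> Q" "D \<subseteq> Q" for T D
  proof
    assume "T \<subseteq> p ` D"
    then have "q ` T \<subseteq> q ` p ` D" by (rule image_mono)
    then show "q ` T \<subseteq> D" using inj that(2) unfolding q_def by simp
  next
    assume "q ` T \<subseteq> D"
    then have "p ` q ` T \<subseteq> p ` D" by (rule image_mono)
    then show "T \<subseteq> p ` D" using surj that(1) unfolding q_def by (simp add: image_inv_into_cancel)
  qed
  have unique: "\<exists>!K. K \<in> (`) p ` S \<and> T \<subseteq> K" if T: "T \<subseteq> Q" "card T = t" for T
  proof -
    have "q ` T \<subseteq> Q" using q T(1) by (metis bij_betw_def image_mono)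
    moreover have "card (q ` T) = t" using q T by (metis bij_betw_def card_image inj_on_subset)
    ultimately obtain D where D: "D \<in> S" "q ` T \<subseteq> D"
      and uniq: "\<And>D'. D' \<in> S \<Longrightarrow> q ` T \<subseteq> D' \<Longrightarrow> D' = D"
      using S unfolding steiner_system_def by metis
    show ?thesis
    proof (rule ex1I[of _ "p ` D"])
      show "p ` D \<in> (`) p ` S \<and> T \<subseteq> p ` D"
        using D blocks(1)[OF D(1)] cover_iff[OF T(1)] by blast
    next
      fix K assume "K \<in> (`) p ` S \<and> T \<subseteq> K"
      then obtain D' where "D' \<in> S" "K = p ` D'" "T \<subseteq> p ` D'" by auto
      then show "K = p ` D" using uniq cover_iff[OF T(1) blocks(1)] by blast
    qed
  qed
  have image_blocks: "K \<subseteq> Q \<and> card K = k" if K: "K \<in> (`) p ` S" for K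
  proof -
    obtain D where "D \<in> S" "K = p ` D" using K by blast
    then show ?thesis
      using blocks[of D] image_mono[of D Q p] surj inj_on_subset[OF inj] by (simp add: card_image)
  qed
  show ?thesis
    unfolding steiner_system_def using image_blocks unique by (intro conjI ballI allI impI) auto
qed

lemma steiner_system_card_extensions:
  assumes S: "steiner_system t (Suc t) Q S" and T: "T \<subseteq> Q" "card T = t"
  shows "card {x \<in> Q - T. insert x T \<in> S} = 1"
proof -
  obtain K where K: "K \<in> S" "T \<subseteq> K" and uniq: "\<And>K'. K' \<in> S \<Longrightarrow> T \<subseteq> K' \<Longrightarrow> K' = K"
    using S T unfolding steiner_system_def by metis
  have "K \<subseteq> Q" "card K = Suc t" using S K unfolding steiner_system_def by auto
  then have "finite K" by (intro card_ge_0_finite) simp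
  with K(2) T(2) \<open>card K = Suc t\<close> have "card (K - T) = 1"
    by (simp add: card_Diff_subset finite_subset[OF K(2)])
  then obtain x where x: "K - T = {x}" by (meson card_1_singletonE)
  have "insert x T = K" using x K(2) by blast
  then have "y \<in> Q - T \<and> insert y T \<in> S \<longleftrightarrow> y = x" for y
    using uniq[of "insert y T"] K(1) x \<open>K \<subseteq> Q\<close> by blast
  then show ?thesis by simp
qed

lemma image_eq_iff_traces:
  assumes "A \<inter> B = {}" "\<forall>x\<in>A. p x = x" "p ` B \<subseteq> B" "D \<subseteq> A \<union> B" "K \<subseteq> A \<union> B"
  shows "p ` D = K \<longleftrightarrow> D \<inter> A = K \<inter> A \<and> p ` (D \<inter> B) = K \<inter> B"
proof -
  have "p ` (D \<inter> A) = (\<lambda>x. x) ` (D \<inter> A)" using assms(2) by (intro image_cong) auto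
  moreover have "D = (D \<inter> A) \<union> (D \<inter> B)" using assms(4) by blast
  ultimately have image_D: "p ` D = (D \<inter> A) \<union> p ` (D \<inter> B)" by (metis image_Un image_ident)
  have "(D \<inter> A) \<union> P = K \<longleftrightarrow> D \<inter> A = K \<inter> A \<and> P = K \<inter> B" if "P \<subseteq> B" for P
    using that assms(1,5) by blast
  moreover have "p ` (D \<inter> B) \<subseteq> B" using assms(3) by blast
  ultimately show ?thesis unfolding image_D by blast
qed

lemma card_traces:
  assumes "finite L" "L \<subseteq> A \<union> B" "A \<inter> B = {}"
  shows "card L = card (L \<inter> A) + card (L \<inter> B)"
proof -
  have "L - A = L \<inter> B" using assms(2,3) by blast
  then show ?thesis using card_Int_Diff[OF assms(1), of A] by simp
qed

lemma (in homogeneous_perm_list) length_filter_image_eq_same_trace: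
  assumes A: "finite A" "A \<inter> U = {}" and fix_A: "\<And>f x. f \<in> set fs \<Longrightarrow> x \<in> A \<Longrightarrow> f x = x"
    and D: "D \<subseteq> A \<union> U" "card D \<le> k" "card D + k \<le> card U"
    and K: "K \<subseteq> A \<union> U" "K' \<subseteq> A \<union> U" "card K = card D" "card K' = card D" "K \<inter> A = K' \<inter> A"
  shows "length (filter (\<lambda>f. f ` D = K) fs) = length (filter (\<lambda>f. f ` D = K') fs)"
proof -
  have traces: "filter (\<lambda>f. f ` D = L) fs = filter (\<lambda>f. D \<inter> A = L \<inter> A \<and> f ` (D \<inter> U) = L \<inter> U) fs"
    if "L \<subseteq> A \<union> U" for L
    using image_eq_iff_traces[OF A(2) _ image_fs_subset D(1) that] fix_A by (intro filter_cong) auto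
  show ?thesis
  proof (cases "D \<inter> A = K \<inter> A")
    case False
    then show ?thesis unfolding traces[OF K(1)] traces[OF K(2)] K(5) by simp
  next
    case True
    have fin: "finite L" if "L \<subseteq> A \<union> U" for L
      using that A finite_U finite_subset by blast
    have "card (K \<inter> U) = card (D \<inter> U)" "card (K' \<inter> U) = card (D \<inter> U)"
      using card_traces[OF fin[OF D(1)] D(1) A(2)] card_traces[OF fin[OF K(1)] K(1) A(2)]
        card_traces[OF fin[OF K(2)] K(2) A(2)] K True by simp_all
    moreover have "card (D \<inter> U) \<le> card D" using fin[OF D(1)] by (simp add: card_mono)
    ultimately have "length (filter (\<lambda>f. f ` (D \<inter> U) = K \<inter> U) fs) =
        length (filter (\<lambda>f. f ` (D \<inter> U) = K' \<inter> U) fs)"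
      using D by (intro length_filter_image_eq_indep) auto
    then show ?thesis unfolding traces[OF K(1)] traces[OF K(2)] using K(5) True by simp
  qed
qed

lemma mult_eq_of_partial_sums:
  fixes m e s c N :: nat
  assumes "e < m" "N = s + (m - e) * c" "m * s = e * N"
  shows "m * c = N"
proof -
  obtain d where d: "m = e + d" "d > 0" using assms(1) by (metis less_imp_add_positive)
  have "e * N + d * N = m * N" using d(1) by (simp add: algebra_simps)
  also have "\<dots> = m * s + d * (m * c)" using assms(2) d(1) by (simp add: algebra_simps)
  also have "\<dots> = e * N + d * (m * c)" using assms(3) by simp
  finally show ?thesis using d(2) by simp
qed

text \<open>Induction on the number of points of \<open>A\<close> missing from \<open>K\<close>: removing a point of
  \<open>K \<inter> B\<close> leaves a \<open>t\<close>-set \<open>T\<close> whose extensions by points of \<open>B\<close> have the trace of \<open>K\<close>,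
  while those by points of \<open>A\<close> miss one point of \<open>A\<close> less.\<close>
lemma mult_eq_of_extension_sums:
  fixes c :: "'a set \<Rightarrow> nat"
  assumes A: "finite A" "card A = t" and B: "finite B" "A \<inter> B = {}" "t < card B"
    and trace: "\<And>K K'. K \<subseteq> A \<union> B \<Longrightarrow> K' \<subseteq> A \<union> B \<Longrightarrow> card K = Suc t \<Longrightarrow> card K' = Suc t \<Longrightarrow>
        K \<inter> A = K' \<inter> A \<Longrightarrow> c K = c K'"
    and extensions: "\<And>T. T \<subseteq> A \<union> B \<Longrightarrow> card T = t \<Longrightarrow> (\<Sum>x\<in>(A \<union> B) - T. c (insert x T)) = N"
  shows "K \<subseteq> A \<union> B \<Longrightarrow> card K = Suc t \<Longrightarrow> card B * c K = N"
proof (induction "t - card (K \<inter> A)" arbitrary: K rule: less_induct)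
  case less
  define e where "e = t - card (K \<inter> A)"
  have "finite K" using less.prems(2) by (intro card_ge_0_finite) simp
  have "card (K \<inter> A) \<le> t" using A by (metis Int_lower2 card_mono)
  have "\<not> K \<subseteq> A"
  proof
    assume "K \<subseteq> A"
    then have "card K \<le> t" using A card_mono by metis
    then show False using less.prems(2) by simp
  qed
  then obtain b where b: "b \<in> K" "b \<in> B" using less.prems(1) by blast
  define T where "T = K - {b}"
  have T: "T \<subseteq> A \<union> B" "card T = t" "T \<inter> A = K \<inter> A" "finite T"
    using less.prems b B(2) \<open>finite K\<close> unfolding T_def by auto
  have "card (A - K) = e"
    using A \<open>finite K\<close> unfolding e_def by (simp add: card_Diff_subset_Int Int_commute)
  have "card (B - T) = card B - e"
    using card_traces[OF T(4,1) B(2)] T B(1) unfolding e_def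
    by (simp add: card_Diff_subset_Int Int_commute)
  have split: "(A \<union> B) - T = (A - K) \<union> (B - T)" "(A - K) \<inter> (B - T) = {}"
    using b B(2) unfolding T_def by auto
  have in_B: "c (insert x T) = c K" if "x \<in> B - T" for x
    using that less.prems T B(2) b unfolding T_def by (intro trace) (auto simp: insert_absorb)
  have in_A: "card B * c (insert x T) = N" if x: "x \<in> A - K" for x
  proof (rule less.hyps)
    have "insert x T \<inter> A = insert x (K \<inter> A)" "x \<notin> K \<inter> A" using x T(3) by auto
    moreover have "K \<inter> A \<subset> A" using x by blast
    then have "card (K \<inter> A) < t" using A psubset_card_mono by metis
    ultimately show "t - card (insert x T \<inter> A) < t - card (K \<inter> A)"
      using \<open>finite K\<close> by simp
    show "insert x T \<subseteq> A \<union> B" "card (insert x T) = Suc t" using x T by auto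
  qed
  define s where "s = (\<Sum>x\<in>A - K. c (insert x T))"
  have "N = (\<Sum>x\<in>(A - K) \<union> (B - T). c (insert x T))"
    using extensions[OF T(1,2)] split(1) by simp
  also have "\<dots> = s + (\<Sum>x\<in>B - T. c (insert x T))"
    unfolding s_def using A(1) B(1) split(2) by (simp add: sum.union_disjoint)
  also have "(\<Sum>x\<in>B - T. c (insert x T)) = (card B - e) * c K"
    using in_B \<open>card (B - T) = card B - e\<close> by simp
  finally have "N = s + (card B - e) * c K" .
  moreover have "card B * s = e * N"
    using in_A unfolding s_def \<open>card (A - K) = e\<close>[symmetric] by (simp add: sum_distrib_left)
  moreover have "e < card B" using B(3) unfolding e_def by simp
  ultimately show ?case using mult_eq_of_partial_sums by blast
qed

lemma length_filter_mem_image_eq_sum: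
  assumes inj: "\<And>p. p \<in> set ps \<Longrightarrow> inj_on p Q" and S: "S \<subseteq> Pow Q" "finite S"
  shows "length (filter (\<lambda>p. K \<in> (`) p ` S) ps) = (\<Sum>D\<in>S. length (filter (\<lambda>p. p ` D = K) ps))"
proof -
  have fiber: "card {D\<in>S. p ` D = K} = of_bool (K \<in> (`) p ` S)" if "p \<in> set ps" for p
    using inj_on_subset[OF inj_on_image_Pow[OF inj[OF that]] S(1)] by (rule card_inj_on_fiber)
  have "(\<Sum>D\<in>S. length (filter (\<lambda>p. p ` D = K) ps)) = (\<Sum>p\<leftarrow>ps. card {D\<in>S. p ` D = K})"
    by (rule sum_length_filter_eq_sum_list_card[OF S(2)])
  also have "\<dots> = (\<Sum>p\<leftarrow>ps. of_bool (K \<in> (`) p ` S) * 1)"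
    using fiber by (intro arg_cong[where f = sum_list] map_cong) auto
  finally show ?thesis by (simp only: sum_list_of_bool_mult)
qed

lemma large_set_of_homogeneous_perm_list:
  assumes S: "steiner_system t (Suc t) (A \<union> B) S"
    and A: "finite A" "card A = t" "A \<inter> B = {}"
    and hom: "homogeneous_perm_list B fs (Suc t) lam"
    and fix_A: "\<And>f x. f \<in> set fs \<Longrightarrow> x \<in> A \<Longrightarrow> f x = x"
    and B: "2 * Suc t \<le> card B"
  shows "large_set t (Suc t) (A \<union> B) (length fs div card B) (map (\<lambda>p. (`) p ` S) fs)"
proof -
  interpret homogeneous_perm_list B fs "Suc t" lam by (fact hom)
  have bij: "bij_betw f (A \<union> B) (A \<union> B)" if f: "f \<in> set fs" for f
  proof -
    have "bij_betw f A A" using bij_betw_cong[of A f id A] fix_A[OF f] by simp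
    then show ?thesis using bij_betw_combine[OF _ bij_betw_fs[OF f]] A(3) by blast
  qed
  have systems: "steiner_system t (Suc t) (A \<union> B) ((`) p ` S)" if "p \<in> set fs" for p
    using steiner_system_image[OF bij[OF that] S] .
  have blocks: "S \<subseteq> Pow (A \<union> B)" "finite S" "\<And>D. D \<in> S \<Longrightarrow> card D = Suc t"
    using S A(1) finite_U unfolding steiner_system_def
    by (auto intro: finite_subset[of _ "Pow (A \<union> B)"])
  define c where "c K = length (filter (\<lambda>p. K \<in> (`) p ` S) fs)" for K
  have c_sum: "c K = (\<Sum>D\<in>S. length (filter (\<lambda>p. p ` D = K) fs))" for K
    unfolding c_def using bij blocks(1,2)
    by (intro length_filter_mem_image_eq_sum) (auto simp: bij_betw_def)
  have trace: "c K = c K'"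
    if "K \<subseteq> A \<union> B" "K' \<subseteq> A \<union> B" "card K = Suc t" "card K' = Suc t" "K \<inter> A = K' \<inter> A" for K K'
    unfolding c_sum using that blocks B fix_A
    by (intro sum.cong refl length_filter_image_eq_same_trace[OF A(1,3)]) auto
  have extensions: "(\<Sum>x\<in>(A \<union> B) - T. c (insert x T)) = length fs"
    if "T \<subseteq> A \<union> B" "card T = t" for T
  proof -
    have "(\<Sum>x\<in>(A \<union> B) - T. c (insert x T)) =
        (\<Sum>p\<leftarrow>fs. card {x\<in>(A \<union> B) - T. insert x T \<in> (`) p ` S})"
      unfolding c_def using A(1) finite_U by (intro sum_length_filter_eq_sum_list_card) simp
    also have "\<dots> = (\<Sum>p\<leftarrow>fs. 1)"
      using steiner_system_card_extensions[OF systems that]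
      by (intro arg_cong[where f = sum_list] map_cong) auto
    finally show ?thesis by (simp add: sum_list_triv)
  qed
  have count: "card B * c K = length fs" if "K \<subseteq> A \<union> B" "card K = Suc t" for K
    using B
    by (intro mult_eq_of_extension_sums[OF A(1,2) finite_U A(3) _ trace extensions that]) auto
  have "card B \<noteq> 0" using B by simp
  then have "c K = length fs div card B" if "K \<subseteq> A \<union> B" "card K = Suc t" for K
    using count[OF that] by (metis nonzero_mult_div_cancel_left)
  then show ?thesis
    unfolding large_set_def using systems by (auto simp: c_def comp_def)
qed

lemma bij_betw_nth_upto:
  assumes "length r = m" "distinct r" "set r \<subseteq> {0..<m}"
  shows "bij_betw ((!) r) {0..<m} {0..<m}"
proof -
  have "set r = {0..<m}" using assms by (simp add: card_subset_eq distinct_card)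
  then show ?thesis using assms by (intro bij_betw_nth) (auto simp: atLeast0LessThan)
qed

lemma bij_betw_image_conj_eq_iff:
  assumes \<phi>: "bij_betw \<phi> I B" and \<sigma>: "bij_betw \<sigma> I I" and "X \<subseteq> B" "Y \<subseteq> B"
  shows "\<phi> ` \<sigma> ` inv_into I \<phi> ` X = Y \<longleftrightarrow> \<sigma> ` inv_into I \<phi> ` X = inv_into I \<phi> ` Y"
proof -
  have "inv_into I \<phi> ` X \<subseteq> I" "inv_into I \<phi> ` Y \<subseteq> I"
    using bij_betw_inv_into[OF \<phi>] assms(3,4) unfolding bij_betw_def by auto
  moreover from this(1) have "\<sigma> ` inv_into I \<phi> ` X \<subseteq> I" using \<sigma> by (metis bij_betw_def image_mono)
  moreover have "Y = \<phi> ` inv_into I \<phi> ` Y"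
    using \<phi> assms(4) unfolding bij_betw_def by (simp add: image_inv_into_cancel)
  ultimately show ?thesis using inj_on_image_eq_iff[OF bij_betw_imp_inj_on[OF \<phi>]] by metis
qed

lemma homogeneous_perm_list_of_perp_array:
  assumes M: "perp_array lam k m m M" and \<phi>: "bij_betw \<phi> {0..<m} B"
  shows "homogeneous_perm_list B
    (map (\<lambda>r x. if x \<in> B then \<phi> (r ! inv_into {0..<m} \<phi> x) else x) M) k lam"
proof -
  define \<psi> where "\<psi> = inv_into {0..<m} \<phi>"
  define \<pi> where "\<pi> r x = (if x \<in> B then \<phi> (r ! \<psi> x) else x)" for r x
  have \<psi>: "bij_betw \<psi> B {0..<m}" unfolding \<psi>_def using \<phi> by (rule bij_betw_inv_into)
  have rows: "bij_betw ((!) r) {0..<m} {0..<m}" if "r \<in> set M" for r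
    using M that unfolding perp_array_def by (intro bij_betw_nth_upto) auto
  have \<pi>_image: "\<pi> r ` X = \<phi> ` (!) r ` \<psi> ` X" if "X \<subseteq> B" for r X
    using that unfolding \<pi>_def image_image by (intro image_cong) auto
  have \<pi>_bij: "bij_betw (\<pi> r) B B" if "r \<in> set M" for r
  proof -
    have "bij_betw (\<phi> \<circ> ((!) r \<circ> \<psi>)) B B"
      by (rule bij_betw_trans[OF bij_betw_trans[OF \<psi> rows[OF that]] \<phi>])
    then show ?thesis using bij_betw_cong[of B "\<pi> r" "\<phi> \<circ> ((!) r \<circ> \<psi>)" B] unfolding \<pi>_def by simp
  qed
  have homogeneous: "length (filter (\<lambda>f. f ` X = Y) (map \<pi> M)) = lam"
    if "X \<subseteq> B" "Y \<subseteq> B" "card X = k" "card Y = k" for X Y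
  proof -
    have "card (\<psi> ` X) = k" "card (\<psi> ` Y) = k" "\<psi> ` X \<subseteq> {0..<m}" "\<psi> ` Y \<subseteq> {0..<m}"
      using \<psi> that unfolding bij_betw_def by (auto simp: card_image inj_on_subset)
    then have "length (filter (\<lambda>r. (\<lambda>c. r ! c) ` \<psi> ` X = \<psi> ` Y) M) = lam"
      using M unfolding perp_array_def by blast
    moreover have "filter (\<lambda>r. \<pi> r ` X = Y) M = filter (\<lambda>r. (\<lambda>c. r ! c) ` \<psi> ` X = \<psi> ` Y) M"
      using bij_betw_image_conj_eq_iff[OF \<phi> rows that(1,2), folded \<psi>_def] \<pi>_image[OF that(1)]
      by (intro filter_cong) auto
    ultimately show ?thesis by (simp add: comp_def)
  qed
  have fs: "map (\<lambda>r x. if x \<in> B then \<phi> (r ! inv_into {0..<m} \<phi> x) else x) M = map \<pi> M"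
    unfolding \<pi>_def \<psi>_def ..
  show ?thesis
    unfolding fs
  proof (rule homogeneous_perm_list.intro)
    show "finite B" using \<phi> bij_betw_finite by blast
    show "bij_betw f B B" if "f \<in> set (map \<pi> M)" for f using that \<pi>_bij by auto
  qed (fact homogeneous)
qed

lemma mult_binomial_Suc_div: "a * (Suc m choose Suc k) div Suc m = a * (m choose k) div Suc k"
proof -
  have "Suc k * (a * (Suc m choose Suc k)) = Suc m * (a * (m choose k))"
    using Suc_times_binomial_eq[of m k] by (simp add: algebra_simps)
  then have "(Suc k * (a * (Suc m choose Suc k))) div (Suc k * Suc m) =
      (Suc m * (a * (m choose k))) div (Suc m * Suc k)"
    by (simp add: mult.commute)
  then show ?thesis by (simp only: div_mult_mult1 nat.distinct(1) not_False_eq_True)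
qed

theorem theorem19:
  fixes n lam :: nat and S :: "nat set set" and A B :: "nat set"
  assumes "n \<ge> 14"
    and "steiner_system 3 4 {0..<n} S"
    and "A \<union> B = {0..<n}" and "A \<inter> B = {}" and "card A = 3" and "card B = n - 3"
    and "\<exists>M. perp_array lam 4 (n - 3) (n - 3) M"
  shows "\<exists>Ls. large_set 3 4 {0..<n} (lam * ((n - 4) choose 3) div 4) Ls"
proof -
  obtain M where M: "perp_array lam 4 (n - 3) (n - 3) M" using assms(7) by blast
  have "finite A" "finite B" using assms(3) by (metis finite_Un finite_atLeastLessThan)+
  then obtain \<phi> where \<phi>: "bij_betw \<phi> {0..<n - 3} B" using ex_bij_betw_nat_finite assms(6) by metis
  define fs where "fs = map (\<lambda>r x. if x \<in> B then \<phi> (r ! inv_into {0..<n - 3} \<phi> x) else x) M"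
  have hom: "homogeneous_perm_list B fs (Suc 3) lam"
    unfolding fs_def using homogeneous_perm_list_of_perp_array[OF M \<phi>] by simp
  have S: "steiner_system 3 (Suc 3) (A \<union> B) S" using assms(2,3) by simp
  have fix_A: "f x = x" if "f \<in> set fs" "x \<in> A" for f x
    using that assms(4) unfolding fs_def by auto
  have "large_set 3 (Suc 3) (A \<union> B) (length fs div card B) (map (\<lambda>p. (`) p ` S) fs)"
    using fix_A assms(1,6)
    by (intro large_set_of_homogeneous_perm_list[OF S \<open>finite A\<close> assms(5,4) hom]) simp_all
  moreover have "length fs div card B = lam * ((n - 4) choose 3) div 4"
  proof -
    have "n - 3 = Suc (n - 4)" using assms(1) by simp
    then show ?thesis
      using M assms(6) mult_binomial_Suc_div[of lam "n - 4" 3]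
      unfolding fs_def perp_array_def by simp
  qed
  ultimately have "large_set 3 4 {0..<n} (lam * ((n - 4) choose 3) div 4) (map (\<lambda>p. (`) p ` S) fs)"
    using assms(3) by simp
  then show ?thesis ..
qed

end
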